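(* Let $X$ be a Banach space and $M,N:\Sigma\to cb(X)$ two consistent $d_H$-multimeasures. If there is a non-negative bounded measurable function $\theta:\Omega\to\mathbb R$ such that $j\circ M(E)=(BDS)\int_E\theta\,d(j\circ N)$ for every $E\in\Sigma$, then $\theta$ is $BDS_m$-integrable with respect to $N$ and $M(E)=\int_E\theta\,dN$ for every $E\in\Sigma$.
   Context: $(\Omega,\Sigma)$ is a measurable space, $X$ a Banach space with dual unit ball $B_{X'}$. $cb(X)$: nonempty closed bounded convex subsets of $X$ with Hausdorff metric $d_H$; $s(x',C)=\sup\{\langle x',x\rangle:x\in C\}$. A $d_H$-multimeasure is $M:\Sigma\to cb(X)$ countably additive in $d_H$. $-N$: $E\mapsto\{-x:x\in N(E)\}$. $\mathcal N(M)=\{E:M(E)=\{0\}\}$; $M,N$ are consistent if there is $H\in\Sigma$ such that both are pointless on $H$ (no $E\subseteq H$, $E\in\Sigma\setminus\mathcal N$, on which the restriction is of the form $F\mapsto\{\kappa(F)\}$ with $\kappa$ a countably additive vector measure) and both are of that vector form on $\Omega\setminus H$. Rådström embedding: $j(A)=s(\cdot,A)|_{B_{X'}}\in\ell_\infty(B_{X'})$. For a vector measure $n:\Sigma\to Y$, $(BDS)\int_Ef\,dn$ is the element $\nu(E)\in Y$ with $\langle y',\nu(E)\rangle=\int_Ef\,d\langle y',n\rangle$ for all $y'\in Y'$. $BDS_m$-integral: measurable $f$ is $BDS_m$-integrable w.r.t. $N$ if for all $E,x'$ the expression $\int_Ef^+ds(x',N)+\int_Ef^-ds(x',-N)$ makes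 sense and for each $E$ there is a nonempty closed convex $M_f(E)$ with $s(x',M_f(E))$ equal to it for all $x'\in X'$; $\int_Ef\,dN:=M_f(E)$. *)

theory Defs
  imports "HOL-Analysis.Analysis" "HOL-Library.Set_Algebras"
begin

definition cb :: "'x::real_normed_vector set \<Rightarrow> bool" where
  "cb C \<longleftrightarrow> C \<noteq> {} \<and> closed C \<and> bounded C \<and> convex C"

definition supp :: "('x::real_normed_vector \<Rightarrow>\<^sub>L real) \<Rightarrow> 'x set \<Rightarrow> real" where
  "supp x' C = Sup ((\<lambda>x. blinfun_apply x' x) ` C)"

definition hausdorff_dist :: "'x::real_normed_vector set \<Rightarrow> 'x set \<Rightarrow> real" where
  "hausdorff_dist A B = max (SUP a\<in>A. infdist a B) (SUP b\<in>B. infdist b A)"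

text \<open>Addition in cb(X): closure of the Minkowski sum; finite sums of a sequence.\<close>
primrec cb_partial_sum :: "(nat \<Rightarrow> 'x::real_normed_vector set) \<Rightarrow> nat \<Rightarrow> 'x set" where
  "cb_partial_sum A 0 = {0}"
| "cb_partial_sum A (Suc n) = closure (cb_partial_sum A n + A n)"

definition dH_multimeasure :: "'a measure \<Rightarrow> ('a set \<Rightarrow> 'x::real_normed_vector set) \<Rightarrow> bool" where
  "dH_multimeasure \<Omega> M \<longleftrightarrow>
     (\<forall>E\<in>sets \<Omega>. cb (M E)) \<and>
     (\<forall>F::nat \<Rightarrow> 'a set. range F \<subseteq> sets \<Omega> \<longrightarrow> disjoint_family F \<longrightarrow>
        (\<lambda>n. hausdorff_dist (cb_partial_sum (\<lambda>k. M (F k)) n) (M (\<Union>k. F k))) \<longlonglongrightarrow> 0)"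

definition ca_vector_measure_on :: "'a measure \<Rightarrow> 'a set \<Rightarrow> ('a set \<Rightarrow> 'x::real_normed_vector) \<Rightarrow> bool" where
  "ca_vector_measure_on \<Omega> E \<kappa> \<longleftrightarrow>
     (\<forall>F::nat \<Rightarrow> 'a set. range F \<subseteq> sets \<Omega> \<longrightarrow> (\<forall>n. F n \<subseteq> E) \<longrightarrow> disjoint_family F \<longrightarrow>
        (\<lambda>n. \<Sum>k<n. \<kappa> (F k)) \<longlonglongrightarrow> \<kappa> (\<Union>k. F k))"

definition vector_form_on :: "'a measure \<Rightarrow> ('a set \<Rightarrow> 'x::real_normed_vector set) \<Rightarrow> 'a set \<Rightarrow> bool" where
  "vector_form_on \<Omega> M E \<longleftrightarrow>
     (\<exists>\<kappa>. ca_vector_measure_on \<Omega> E \<kappa> \<and> (\<forall>F\<in>sets \<Omega>. F \<subseteq> E \<longrightarrow> M F = {\<kappa> F}))"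

definition pointless_on :: "'a measure \<Rightarrow> ('a set \<Rightarrow> 'x::real_normed_vector set) \<Rightarrow> 'a set \<Rightarrow> bool" where
  "pointless_on \<Omega> M H \<longleftrightarrow>
     \<not> (\<exists>E\<in>sets \<Omega>. E \<subseteq> H \<and> M E \<noteq> {0} \<and> vector_form_on \<Omega> M E)"

definition consistent :: "'a measure \<Rightarrow> ('a set \<Rightarrow> 'x::real_normed_vector set) \<Rightarrow> ('a set \<Rightarrow> 'x set) \<Rightarrow> bool" where
  "consistent \<Omega> M N \<longleftrightarrow>
     (\<exists>H\<in>sets \<Omega>. pointless_on \<Omega> M H \<and> pointless_on \<Omega> N H \<and>
        vector_form_on \<Omega> M (space \<Omega> - H) \<and> vector_form_on \<Omega> N (space \<Omega> - H))"

text \<open>Hahn decomposition and Jordan decomposition of a real-valued countably additive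
  set function \<mu> on sets \<Omega>; \<open>\<integral>_E f d\<mu>\<close> is \<open>\<integral>_E f d\<mu>\<^sup>+ - \<integral>_E f d\<mu>\<^sup>-\<close>.\<close>
definition hahn_pos :: "'a measure \<Rightarrow> ('a set \<Rightarrow> real) \<Rightarrow> 'a set" where
  "hahn_pos \<Omega> \<mu> = (SOME P. P \<in> sets \<Omega> \<and>
      (\<forall>A\<in>sets \<Omega>. A \<subseteq> P \<longrightarrow> 0 \<le> \<mu> A) \<and>
      (\<forall>A\<in>sets \<Omega>. A \<subseteq> space \<Omega> - P \<longrightarrow> \<mu> A \<le> 0))"

definition pos_var :: "'a measure \<Rightarrow> ('a set \<Rightarrow> real) \<Rightarrow> 'a measure" where
  "pos_var \<Omega> \<mu> = measure_of (space \<Omega>) (sets \<Omega>) (\<lambda>A. ennreal (\<mu> (A \<inter> hahn_pos \<Omega> \<mu>)))"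

definition neg_var :: "'a measure \<Rightarrow> ('a set \<Rightarrow> real) \<Rightarrow> 'a measure" where
  "neg_var \<Omega> \<mu> = measure_of (space \<Omega>) (sets \<Omega>) (\<lambda>A. ennreal (- \<mu> (A - hahn_pos \<Omega> \<mu>)))"

definition signed_integrable_on :: "'a measure \<Rightarrow> ('a set \<Rightarrow> real) \<Rightarrow> ('a \<Rightarrow> real) \<Rightarrow> 'a set \<Rightarrow> bool" where
  "signed_integrable_on \<Omega> \<mu> f E \<longleftrightarrow>
     integrable (pos_var \<Omega> \<mu>) (\<lambda>x. indicator E x * f x) \<and>
     integrable (neg_var \<Omega> \<mu>) (\<lambda>x. indicator E x * f x)"

definition signed_integral_on :: "'a measure \<Rightarrow> ('a set \<Rightarrow> real) \<Rightarrow> ('a \<Rightarrow> real) \<Rightarrow> 'a set \<Rightarrow> real" where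
  "signed_integral_on \<Omega> \<mu> f E =
     (\<integral>x. indicator E x * f x \<partial>pos_var \<Omega> \<mu>) - (\<integral>x. indicator E x * f x \<partial>neg_var \<Omega> \<mu>)"

definition dual_ball :: "('x::real_normed_vector \<Rightarrow>\<^sub>L real) set" where
  "dual_ball = {x'. norm x' \<le> 1}"

text \<open>l_infinity(B_X'), realised as bounded functions on B_X' vanishing outside B_X'.\<close>
definition linf :: "(('x::real_normed_vector \<Rightarrow>\<^sub>L real) \<Rightarrow> real) set" where
  "linf = {g. bounded (g ` dual_ball) \<and> (\<forall>x'. x' \<notin> dual_ball \<longrightarrow> g x' = 0)}"

definition linf_norm :: "(('x::real_normed_vector \<Rightarrow>\<^sub>L real) \<Rightarrow> real) \<Rightarrow> real" where
  "linf_norm g = (SUP x'\<in>dual_ball. \<bar>g x'\<bar>)"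

definition linf_dual :: "((('x::real_normed_vector \<Rightarrow>\<^sub>L real) \<Rightarrow> real) \<Rightarrow> real) set" where
  "linf_dual = {\<phi>. (\<forall>g\<in>linf. \<forall>h\<in>linf. \<forall>a b. \<phi> (\<lambda>x'. a * g x' + b * h x') = a * \<phi> g + b * \<phi> h) \<and>
                   (\<exists>C. \<forall>g\<in>linf. \<bar>\<phi> g\<bar> \<le> C * linf_norm g)}"

definition radstrom :: "'x::real_normed_vector set \<Rightarrow> (('x \<Rightarrow>\<^sub>L real) \<Rightarrow> real)" where
  "radstrom A = (\<lambda>x'. if x' \<in> dual_ball then supp x' A else 0)"

definition is_BDS_integral_linf ::
  "'a measure \<Rightarrow> ('a set \<Rightarrow> (('x::real_normed_vector \<Rightarrow>\<^sub>L real) \<Rightarrow> real)) \<Rightarrow> ('a \<Rightarrow> real) \<Rightarrow> 'a set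
     \<Rightarrow> (('x \<Rightarrow>\<^sub>L real) \<Rightarrow> real) \<Rightarrow> bool" where
  "is_BDS_integral_linf \<Omega> n f E v \<longleftrightarrow> v \<in> linf \<and>
     (\<forall>\<phi>\<in>linf_dual. signed_integrable_on \<Omega> (\<lambda>A. \<phi> (n A)) f E \<and>
                     \<phi> v = signed_integral_on \<Omega> (\<lambda>A. \<phi> (n A)) f E)"

text \<open>\<open>\<integral>_E f\<^sup>+ ds(x',N) + \<integral>_E f\<^sup>- ds(x',-N)\<close>; note s(x',-N(F)) = s(-x',N(F)).\<close>
definition BDSm_sense :: "'a measure \<Rightarrow> ('a set \<Rightarrow> 'x::real_normed_vector set) \<Rightarrow> ('a \<Rightarrow> real)
     \<Rightarrow> 'a set \<Rightarrow> ('x \<Rightarrow>\<^sub>L real) \<Rightarrow> bool" where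
  "BDSm_sense \<Omega> N f E x' \<longleftrightarrow>
     signed_integrable_on \<Omega> (\<lambda>F. supp x' (N F)) (\<lambda>\<omega>. max (f \<omega>) 0) E \<and>
     signed_integrable_on \<Omega> (\<lambda>F. supp x' (uminus ` N F)) (\<lambda>\<omega>. max (- f \<omega>) 0) E"

definition BDSm_expr :: "'a measure \<Rightarrow> ('a set \<Rightarrow> 'x::real_normed_vector set) \<Rightarrow> ('a \<Rightarrow> real)
     \<Rightarrow> 'a set \<Rightarrow> ('x \<Rightarrow>\<^sub>L real) \<Rightarrow> real" where
  "BDSm_expr \<Omega> N f E x' =
     signed_integral_on \<Omega> (\<lambda>F. supp x' (N F)) (\<lambda>\<omega>. max (f \<omega>) 0) E +
     signed_integral_on \<Omega> (\<lambda>F. supp x' (uminus ` N F)) (\<lambda>\<omega>. max (- f \<omega>) 0) E"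

definition is_BDSm_integral :: "'a measure \<Rightarrow> ('a set \<Rightarrow> 'x::real_normed_vector set) \<Rightarrow> ('a \<Rightarrow> real)
     \<Rightarrow> 'a set \<Rightarrow> 'x set \<Rightarrow> bool" where
  "is_BDSm_integral \<Omega> N f E C \<longleftrightarrow> C \<noteq> {} \<and> closed C \<and> convex C \<and>
     (\<forall>x'. supp x' C = BDSm_expr \<Omega> N f E x')"

definition BDSm_integrable :: "'a measure \<Rightarrow> ('a set \<Rightarrow> 'x::real_normed_vector set) \<Rightarrow> ('a \<Rightarrow> real) \<Rightarrow> bool" where
  "BDSm_integrable \<Omega> N f \<longleftrightarrow> f \<in> borel_measurable \<Omega> \<and>
     (\<forall>E\<in>sets \<Omega>. \<forall>x'. BDSm_sense \<Omega> N f E x') \<and>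
     (\<forall>E\<in>sets \<Omega>. \<exists>C. is_BDSm_integral \<Omega> N f E C)"

end

theory Submission
  imports Defs
begin

(* Testing the (BDS) identity for j(M(E)) against evaluation functionals of
   l_infinity(B_X'), at x' rescaled into B_X', gives s(x', M(E)) = \<integral>_E \<theta> ds(x', N)
   for every x' in X'.  Since \<theta> \<ge> 0, the negative part of \<theta> vanishes, so this is
   precisely the defining identity of \<integral>_E \<theta> dN with value M(E), and M(E) is closed
   and convex as an element of cb(X). *)

(* Sup on reals is a LEAST; for an empty or an unbounded set both reduce to THE of an
   unsatisfiable predicate. *)
lemma Sup_real_degenerate:
  fixes S :: "real set"
  assumes "S = {} \<or> \<not> bdd_above S"
  shows "Sup S = Sup ({}::real set)"
proof -
  have "(\<lambda>z. (\<forall>x\<in>S. x \<le> z) \<and> (\<forall>y. (\<forall>x\<in>S. x \<le> y) \<longrightarrow> z \<le> y)) = (\<lambda>z. False)"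
  proof (intro ext iffI)
    fix z assume z: "(\<forall>x\<in>S. x \<le> z) \<and> (\<forall>y. (\<forall>x\<in>S. x \<le> y) \<longrightarrow> z \<le> y)"
    show False
    proof (cases "S = {}")
      case True
      then show False using z[THEN conjunct2, rule_format, of "z - 1"] by simp
    next
      case False
      then show False using assms z by (auto simp: bdd_above_def)
    qed
  qed simp
  moreover have "(\<lambda>z::real. \<forall>y. z \<le> y) = (\<lambda>z. False)"
  proof (intro ext iffI)
    fix z :: real assume "\<forall>y. z \<le> y"
    then have "z \<le> z - 1" by blast
    then show False by simp
  qed simp
  ultimately show ?thesis
    unfolding Sup_real_def Least_def by simp
qed

lemma supp_scaleR:
  fixes C :: "'x::real_normed_vector set"
  assumes "0 < t"
  shows "supp (t *\<^sub>R y') C = (if C \<noteq> {} \<and> bdd_above (blinfun_apply y' ` C)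
           then t * supp y' C else Sup ({}::real set))"
proof -
  have image: "blinfun_apply (t *\<^sub>R y') ` C = (*) t ` blinfun_apply y' ` C"
    by (auto simp: image_image blinfun.scaleR_left)
  have bdd_iff: "bdd_above ((*) t ` blinfun_apply y' ` C) \<longleftrightarrow> bdd_above (blinfun_apply y' ` C)"
  proof
    assume "bdd_above ((*) t ` blinfun_apply y' ` C)"
    then obtain B where "\<And>x. x \<in> C \<Longrightarrow> t * y' x \<le> B"
      by (auto simp: bdd_above_def)
    then have "\<And>x. x \<in> C \<Longrightarrow> y' x \<le> B / t"
      using assms by (simp add: field_simps)
    then show "bdd_above (blinfun_apply y' ` C)" by (auto simp: bdd_above_def)
  next
    assume "bdd_above (blinfun_apply y' ` C)"
    then show "bdd_above ((*) t ` blinfun_apply y' ` C)"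
      using assms by (intro bdd_above_image_mono) (auto simp: mono_def)
  qed
  show ?thesis
  proof (cases "C \<noteq> {} \<and> bdd_above (blinfun_apply y' ` C)")
    case True
    have "t * Sup (blinfun_apply y' ` C) = Sup ((*) t ` blinfun_apply y' ` C)"
      using True assms
      by (intro continuous_at_Sup_mono) (auto simp: mono_def intro!: continuous_intros)
    then show ?thesis
      using True by (simp add: supp_def image)
  next
    case False
    then show ?thesis
      unfolding supp_def image using bdd_iff by (auto intro!: Sup_real_degenerate)
  qed
qed

(* The weights sum to 1, so the identity also holds in the degenerate case, where every
   support value is the junk value Sup {}. *)
lemma supp_affine_combination:
  fixes C :: "'x::real_normed_vector set"
  assumes "0 < s" "0 < t" "0 < c" "a + b = 1" "a * s + b * t = c"
  shows "supp (c *\<^sub>R y') C = a * supp (s *\<^sub>R y') C + b * supp (t *\<^sub>R y') C"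
proof (cases "C \<noteq> {} \<and> bdd_above (blinfun_apply y' ` C)")
  case True
  have scale: "supp (r *\<^sub>R y') C = r * supp y' C" if "0 < r" for r
    unfolding supp_scaleR[OF that] by (simp only: if_P[OF True])
  have "a * supp (s *\<^sub>R y') C + b * supp (t *\<^sub>R y') C = (a * s + b * t) * supp y' C"
    using assms(1,2) by (simp add: scale algebra_simps)
  then show ?thesis
    using assms(3,5) by (simp add: scale)
next
  case False
  have degenerate: "supp (r *\<^sub>R y') C = Sup {}" if "0 < r" for r
    unfolding supp_scaleR[OF that] by (simp only: if_not_P[OF False])
  have "a * supp (s *\<^sub>R y') C + b * supp (t *\<^sub>R y') C = (a + b) * Sup {}"
    using assms(1,2) by (simp add: degenerate distrib_right)
  then show ?thesis
    using assms(3,4) by (simp add: degenerate)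
qed

lemma abs_le_linf_norm:
  assumes "g \<in> linf" "y' \<in> dual_ball"
  shows "\<bar>g y'\<bar> \<le> linf_norm g"
proof -
  from assms(1) obtain B where "\<forall>x'\<in>dual_ball. \<bar>g x'\<bar> \<le> B"
    by (auto simp: linf_def bounded_iff)
  then have "bdd_above ((\<lambda>x'. \<bar>g x'\<bar>) ` dual_ball)"
    by (intro bdd_aboveI2[of _ _ B]) auto
  then show ?thesis
    unfolding linf_norm_def using assms(2) by (rule cSUP_upper2) simp
qed

lemma linear_combination_evaluations_in_linf_dual:
  assumes "y' \<in> dual_ball" "z' \<in> dual_ball"
  shows "(\<lambda>g. a * g y' + b * g z') \<in> linf_dual"
proof -
  have "\<bar>a * g y' + b * g z'\<bar> \<le> (\<bar>a\<bar> + \<bar>b\<bar>) * linf_norm g" if "g \<in> linf" for g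
  proof -
    have "\<bar>a * g y' + b * g z'\<bar> \<le> \<bar>a\<bar> * \<bar>g y'\<bar> + \<bar>b\<bar> * \<bar>g z'\<bar>"
      by (metis abs_mult abs_triangle_ineq)
    also have "\<dots> \<le> \<bar>a\<bar> * linf_norm g + \<bar>b\<bar> * linf_norm g"
      using abs_le_linf_norm[OF that assms(1)] abs_le_linf_norm[OF that assms(2)]
      by (intro add_mono mult_left_mono) auto
    finally show ?thesis by (simp add: distrib_right)
  qed
  then show ?thesis
    unfolding linf_dual_def by (auto simp: algebra_simps intro!: exI[of _ "\<bar>a\<bar> + \<bar>b\<bar>"])
qed

(* For x' = c y' with y' in B_X', the plain multiple c g(y') would not do, since supp
   takes a junk value on degenerate sets; the weights 2c - 1 and 2 - 2c on y' and y'/2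
   sum to 1 and preserve it. *)
lemma ex_linf_dual_radstrom_eq_supp:
  fixes x' :: "'x::real_normed_vector \<Rightarrow>\<^sub>L real"
  shows "\<exists>\<phi>\<in>linf_dual. \<forall>C. \<phi> (radstrom C) = supp x' C"
proof -
  define c where "c = max 1 (norm x')"
  have c: "1 \<le> c" by (simp add: c_def)
  define y' where "y' = (1 / c) *\<^sub>R x'"
  have x': "x' = c *\<^sub>R y'"
    using c by (simp add: y'_def)
  have y': "y' \<in> dual_ball" "(1/2) *\<^sub>R y' \<in> dual_ball"
    using c by (auto simp: dual_ball_def y'_def c_def field_simps)
  define \<phi> where "\<phi> g = (2*c - 1) * g y' + (2 - 2*c) * g ((1/2) *\<^sub>R y')"
    for g :: "('x \<Rightarrow>\<^sub>L real) \<Rightarrow> real"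
  have "\<phi> \<in> linf_dual"
    unfolding \<phi>_def[abs_def] by (rule linear_combination_evaluations_in_linf_dual[OF y'])
  moreover have "\<phi> (radstrom C) = supp x' C" for C
  proof -
    have "supp (c *\<^sub>R y') C = (2*c - 1) * supp (1 *\<^sub>R y') C + (2 - 2*c) * supp ((1/2) *\<^sub>R y') C"
      using c by (intro supp_affine_combination) (auto simp: field_simps)
    then show ?thesis
      using y' by (simp add: \<phi>_def radstrom_def x')
  qed
  ultimately show ?thesis by blast
qed

lemma BDS_integral_radstrom_supp:
  assumes "is_BDS_integral_linf \<Omega> (\<lambda>F. radstrom (N F)) f E (radstrom C)"
  shows "signed_integrable_on \<Omega> (\<lambda>F. supp x' (N F)) f E"
    and "supp x' C = signed_integral_on \<Omega> (\<lambda>F. supp x' (N F)) f E"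
proof -
  obtain \<phi> where "\<phi> \<in> linf_dual" and \<phi>: "\<And>C. \<phi> (radstrom C) = supp x' C"
    using ex_linf_dual_radstrom_eq_supp by blast
  with assms have "signed_integrable_on \<Omega> (\<lambda>F. \<phi> (radstrom (N F))) f E \<and>
      \<phi> (radstrom C) = signed_integral_on \<Omega> (\<lambda>F. \<phi> (radstrom (N F))) f E"
    unfolding is_BDS_integral_linf_def by blast
  then show "signed_integrable_on \<Omega> (\<lambda>F. supp x' (N F)) f E"
    and "supp x' C = signed_integral_on \<Omega> (\<lambda>F. supp x' (N F)) f E"
    by (simp_all add: \<phi>)
qed

lemma
  assumes "E \<in> sets \<Omega>" "\<forall>\<omega>\<in>space \<Omega>. 0 \<le> f \<omega>"
  shows BDSm_sense_nonneg:
      "BDSm_sense \<Omega> N f E x' \<longleftrightarrow> signed_integrable_on \<Omega> (\<lambda>F. supp x' (N F)) f E"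
    and BDSm_expr_nonneg:
      "BDSm_expr \<Omega> N f E x' = signed_integral_on \<Omega> (\<lambda>F. supp x' (N F)) f E"
proof -
  have "E \<subseteq> space \<Omega>"
    using assms(1) sets.sets_into_space by blast
  then have pos: "(\<lambda>\<omega>. indicator E \<omega> * max (f \<omega>) 0) = (\<lambda>\<omega>. indicator E \<omega> * f \<omega>)"
    and neg: "(\<lambda>\<omega>. indicator E \<omega> * max (- f \<omega>) 0) = (\<lambda>\<omega>. 0::real)"
    using assms(2) by (auto simp: indicator_def intro!: ext)
  show "BDSm_sense \<Omega> N f E x' \<longleftrightarrow> signed_integrable_on \<Omega> (\<lambda>F. supp x' (N F)) f E"
    and "BDSm_expr \<Omega> N f E x' = signed_integral_on \<Omega> (\<lambda>F. supp x' (N F)) f E"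
    unfolding BDSm_sense_def BDSm_expr_def signed_integrable_on_def signed_integral_on_def
    by (simp_all add: pos neg)
qed

theorem corollary5p10:
  fixes \<Omega> :: "'a measure"
    and M N :: "'a set \<Rightarrow> 'x::banach set"
    and \<theta> :: "'a \<Rightarrow> real"
  assumes "dH_multimeasure \<Omega> M" and "dH_multimeasure \<Omega> N"
    and "consistent \<Omega> M N"
    and "\<theta> \<in> borel_measurable \<Omega>"
    and "\<forall>\<omega>\<in>space \<Omega>. 0 \<le> \<theta> \<omega>"
    and "\<exists>K. \<forall>\<omega>\<in>space \<Omega>. \<theta> \<omega> \<le> K"
    and "\<forall>E\<in>sets \<Omega>. is_BDS_integral_linf \<Omega> (\<lambda>F. radstrom (N F)) \<theta> E (radstrom (M E))"
  shows "BDSm_integrable \<Omega> N \<theta> \<and> (\<forall>E\<in>sets \<Omega>. is_BDSm_integral \<Omega> N \<theta> E (M E))"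
proof -
  have "BDSm_sense \<Omega> N \<theta> E x'"
    and "is_BDSm_integral \<Omega> N \<theta> E (M E)" if E: "E \<in> sets \<Omega>" for E x'
  proof -
    have BDS: "is_BDS_integral_linf \<Omega> (\<lambda>F. radstrom (N F)) \<theta> E (radstrom (M E))"
      using assms(7) E by blast
    show "BDSm_sense \<Omega> N \<theta> E x'"
      using BDS_integral_radstrom_supp(1)[OF BDS] BDSm_sense_nonneg[OF E assms(5)] by blast
    have "cb (M E)"
      using assms(1) E by (simp add: dH_multimeasure_def)
    moreover have "supp x' (M E) = BDSm_expr \<Omega> N \<theta> E x'" for x'
      using BDS_integral_radstrom_supp(2)[OF BDS] BDSm_expr_nonneg[OF E assms(5), symmetric]
      by (rule trans)
    ultimately show "is_BDSm_integral \<Omega> N \<theta> E (M E)"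
      unfolding is_BDSm_integral_def cb_def by blast
  qed
  then show ?thesis
    unfolding BDSm_integrable_def using assms(4) by blast
qed

end
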